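(* Let $A=(a_{i,k})_{0\le i,k\le d-1}\in\mathbb{Z}^{d\times d}$ be an idealizing matrix. Then for every $1\le j\le d-1$, $a_{j,j}$ divides $a_{i,k}$ for all $0\le i,k\le j$.
   Context: An idealizing matrix is an upper triangular integer matrix $A=(a_{i,k})_{0\le i,k\le d-1}$ with nonzero diagonal entries such that, for each $0\le j\le d-2$, the vector obtained by shifting the $j$-th column down by one, namely $(0,a_{0,j},a_{1,j},\dots,a_{d-2,j})^T$, lies in the $\mathbb{Z}$-span of columns $0,1,\dots,j+1$ of $A$. (Columns are indexed from $0$; the $j$-th column represents the coefficient vector of a polynomial of degree $j$.) *)

theory Defs
  imports Main
begin

text \<open>A d x d integer matrix is represented as a function A :: nat => nat => int,
  where A i k is the entry in row i, column k, for 0 <= i, k <= d - 1.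
  Entries outside this range are irrelevant.\<close>

definition shift_col :: "(nat \<Rightarrow> nat \<Rightarrow> int) \<Rightarrow> nat \<Rightarrow> nat \<Rightarrow> int" where
  "shift_col A j i = (if i = 0 then 0 else A (i - 1) j)"

definition idealizing :: "nat \<Rightarrow> (nat \<Rightarrow> nat \<Rightarrow> int) \<Rightarrow> bool" where
  "idealizing d A \<longleftrightarrow>
     (\<forall>i<d. \<forall>k<d. k < i \<longrightarrow> A i k = 0) \<and>
     (\<forall>i<d. A i i \<noteq> 0) \<and>
     (\<forall>j. j + 2 \<le> d \<longrightarrow>
        (\<exists>c :: nat \<Rightarrow> int. \<forall>i<d. shift_col A j i = (\<Sum>m\<le>j+1. c m * A i m)))"

end

theory Submission
  imports Defs
begin

text \<open>In row \<open>j+1\<close> all columns \<open>m \<le> j\<close> vanish, which gives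
  \<open>A j j = c (j+1) * A (j+1) (j+1)\<close>, so \<open>c (j+1) \<noteq> 0\<close>. In any row \<open>i \<le> j+1\<close> the entries of the
  shifted column and of columns \<open>m \<le> j\<close> are divisible by \<open>A j j\<close> by induction, hence so is
  \<open>c (j+1) * A i (j+1)\<close>; cancelling \<open>c (j+1)\<close> shows \<open>A (j+1) (j+1) dvd A i (j+1)\<close>.\<close>

lemma idealizing_below_diag_zero:
  assumes "idealizing d A" "i < d" "k < i"
  shows "A i k = 0"
  using assms unfolding idealizing_def by simp

lemma idealizing_diag_nonzero:
  assumes "idealizing d A" "i < d"
  shows "A i i \<noteq> 0"
  using assms unfolding idealizing_def by simp

lemma idealizing_shifted_column:
  fixes A :: "nat \<Rightarrow> nat \<Rightarrow> int"
  assumes ide: "idealizing d A" and jd: "j + 2 \<le> d"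
  obtains c where
    "\<And>i. i < d \<Longrightarrow> shift_col A j i = (\<Sum>m\<le>j. c m * A i m) + c (Suc j) * A i (Suc j)"
    "A j j = c (Suc j) * A (Suc j) (Suc j)"
proof -
  obtain c :: "nat \<Rightarrow> int" where c: "\<forall>i<d. shift_col A j i = (\<Sum>m\<le>j+1. c m * A i m)"
    using ide jd unfolding idealizing_def by (meson le_refl)
  then have comb: "shift_col A j i = (\<Sum>m\<le>j. c m * A i m) + c (Suc j) * A i (Suc j)"
    if "i < d" for i
    using that by simp
  have "(\<Sum>m\<le>j. c m * A (Suc j) m) = 0"
    using idealizing_below_diag_zero[OF ide] jd by (intro sum.neutral) auto
  with comb[of "Suc j"] jd have "A j j = c (Suc j) * A (Suc j) (Suc j)"
    by (simp add: shift_col_def)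
  with comb show thesis by (rule that)
qed

lemma idealizing_dvd_step:
  fixes A :: "nat \<Rightarrow> nat \<Rightarrow> int"
  assumes ide: "idealizing d A" and jd: "j + 2 \<le> d"
    and IH: "\<And>i k. i \<le> j \<Longrightarrow> k \<le> j \<Longrightarrow> A j j dvd A i k"
    and i: "i \<le> Suc j" and k: "k \<le> Suc j"
  shows "A (Suc j) (Suc j) dvd A i k"
proof -
  obtain c where comb: "\<And>i. i < d \<Longrightarrow>
      shift_col A j i = (\<Sum>m\<le>j. c m * A i m) + c (Suc j) * A i (Suc j)"
    and diag: "A j j = c (Suc j) * A (Suc j) (Suc j)"
    using idealizing_shifted_column[OF ide jd] by blast
  have "c (Suc j) \<noteq> 0"
    using diag idealizing_diag_nonzero[OF ide, of j] jd by auto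
  have new_column: "A (Suc j) (Suc j) dvd A i' (Suc j)" if "i' \<le> Suc j" for i'
  proof -
    have "A j j dvd shift_col A j i'"
      using IH that by (auto simp: shift_col_def)
    moreover have "A j j dvd (\<Sum>m\<le>j. c m * A i' m)"
    proof (cases "i' \<le> j")
      case True
      then show ?thesis using IH by (intro dvd_sum) auto
    next
      case False
      then show ?thesis
        using that jd idealizing_below_diag_zero[OF ide, of i'] by (intro dvd_sum) auto
    qed
    moreover have "shift_col A j i' = (\<Sum>m\<le>j. c m * A i' m) + c (Suc j) * A i' (Suc j)"
      using comb that jd by simp
    ultimately have "A j j dvd c (Suc j) * A i' (Suc j)"
      by (metis add_diff_cancel_left' dvd_diff)
    with diag \<open>c (Suc j) \<noteq> 0\<close> show ?thesis by simp
  qed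
  consider "k = Suc j" | "i = Suc j" "k \<le> j" | "i \<le> j" "k \<le> j"
    using i k by linarith
  then show ?thesis
  proof cases
    case 1
    then show ?thesis using new_column i by simp
  next
    case 2
    then show ?thesis using idealizing_below_diag_zero[OF ide, of i k] jd by simp
  next
    case 3
    have "A (Suc j) (Suc j) dvd A j j" using diag by simp
    then show ?thesis using IH[OF 3] dvd_trans by blast
  qed
qed

lemma idealizing_diag_dvd_leading_block:
  fixes A :: "nat \<Rightarrow> nat \<Rightarrow> int"
  assumes ide: "idealizing d A"
  shows "j < d \<Longrightarrow> i \<le> j \<Longrightarrow> k \<le> j \<Longrightarrow> A j j dvd A i k"
proof (induction j arbitrary: i k)
  case 0
  then show ?case by simp
next
  case (Suc j)
  then show ?case using idealizing_dvd_step[OF ide, of j i k] by simp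
qed

theorem mainTheorem5:
  fixes d :: nat and A :: "nat \<Rightarrow> nat \<Rightarrow> int"
  assumes "idealizing d A"
  shows "\<forall>j. 1 \<le> j \<and> j \<le> d - 1 \<longrightarrow> (\<forall>i\<le>j. \<forall>k\<le>j. A j j dvd A i k)"
  using idealizing_diag_dvd_leading_block[OF assms] by fastforce

end
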